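(* Let $d\ge1$, $r\in(0,+\infty)$, let $\|\cdot\|$ be a norm on $\mathbb{R}^d$, and let $P$ be a Borel probability measure on $\mathbb{R}^d$ with $\int\|x\|^r\,dP(x)<+\infty$. Let $(a_n)_{n\ge1}$ be an $L^r$-optimal greedy quantization sequence for $P$, $a^{(n)}=\{a_1,\dots,a_n\}$. Let $\varepsilon\in(0,\tfrac13)$, let $\nu$ be a probability distribution on $\mathbb{R}^d$ and let $g_\varepsilon:\mathbb{R}^d\to\mathbb{R}_+$ be a Borel function such that for every $x\in\operatorname{supp}(P)$ and every $t\in[0,\varepsilon\|x-a_1\|]$, $$\nu(B(x,t))\ge g_\varepsilon(x)\,V_d\,t^d.$$ Then $$\forall n\ge2,\quad e_r(a^{(n)},P)\le \varphi_r(\varepsilon)^{-\frac1d}V_d^{-\frac1d}\Big(\frac rd\Big)^{\frac1d}\Big(\int g_\varepsilon^{-\frac rd}\,dP\Big)^{\frac1r}(n-1)^{-\frac1d},$$ where $\varphi_r(u)=\big(\tfrac{1}{3^r}-u^r\big)u^d$.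
   Context: For a finite nonempty $\Gamma\subset\mathbb{R}^d$, $d(x,\Gamma)=\min_{a\in\Gamma}\|x-a\|$ and $e_r(\Gamma,P)=\big(\int d(x,\Gamma)^r dP(x)\big)^{1/r}$. An $L^r$-optimal greedy quantization sequence for $P$ is a sequence $(a_n)_{n\ge1}$ with $a_{n+1}\in\operatorname{argmin}_{\xi\in\mathbb{R}^d}e_r(a^{(n)}\cup\{\xi\},P)$ for all $n\ge0$, where $a^{(0)}=\varnothing$, $a^{(n)}=\{a_1,\dots,a_n\}$ (so $a_1$ is an $L^r$-median of $P$). $B(x,t)=\{y:\|y-x\|\le t\}$, $\lambda_d$ is Lebesgue measure and $V_d=\lambda_d(B(0,1))$ (ball for $\|\cdot\|$). *)

theory Defs
  imports "HOL-Analysis.Analysis" "HOL-Probability.Probability"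
begin

text \<open>An (arbitrary) norm on the finite-dimensional space 'a (a copy of R^d, d = DIM('a)).\<close>
definition is_norm :: "('a::euclidean_space \<Rightarrow> real) \<Rightarrow> bool" where
  "is_norm N \<longleftrightarrow> (\<forall>x. 0 \<le> N x) \<and> (\<forall>x. N x = 0 \<longleftrightarrow> x = 0)
     \<and> (\<forall>c x. N (c *\<^sub>R x) = \<bar>c\<bar> * N x) \<and> (\<forall>x y. N (x + y) \<le> N x + N y)"

definition nball :: "('a::euclidean_space \<Rightarrow> real) \<Rightarrow> 'a \<Rightarrow> real \<Rightarrow> 'a set" where
  "nball N x t = {y. N (y - x) \<le> t}"

definition unit_ball_vol :: "('a::euclidean_space \<Rightarrow> real) \<Rightarrow> real" where
  "unit_ball_vol N = measure lborel (nball N 0 1)"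

definition ndist_set :: "('a::euclidean_space \<Rightarrow> real) \<Rightarrow> 'a \<Rightarrow> 'a set \<Rightarrow> real" where
  "ndist_set N x \<Gamma> = Min ((\<lambda>a. N (x - a)) ` \<Gamma>)"

text \<open>e_r(\<Gamma>,P) = (\<integral> d(x,\<Gamma>)^r dP)^(1/r) (finite under the moment assumption).\<close>
definition quant_err :: "('a::euclidean_space \<Rightarrow> real) \<Rightarrow> real \<Rightarrow> 'a set \<Rightarrow> 'a measure \<Rightarrow> real" where
  "quant_err N r \<Gamma> P = (enn2real (\<integral>\<^sup>+ x. ennreal (ndist_set N x \<Gamma> powr r) \<partial>P)) powr (1 / r)"

text \<open>a^(n) = {a_1,...,a_n} (the sequence is indexed from 1; a 0 is unused).\<close>
definition first_pts :: "(nat \<Rightarrow> 'a) \<Rightarrow> nat \<Rightarrow> 'a set" where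
  "first_pts a n = a ` {1..n}"

definition greedy_seq :: "('a::euclidean_space \<Rightarrow> real) \<Rightarrow> real \<Rightarrow> 'a measure \<Rightarrow> (nat \<Rightarrow> 'a) \<Rightarrow> bool" where
  "greedy_seq N r P a \<longleftrightarrow> (\<forall>n. \<forall>\<xi>.
     quant_err N r (first_pts a n \<union> {a (Suc n)}) P \<le> quant_err N r (first_pts a n \<union> {\<xi>}) P)"

definition msupp :: "('a::euclidean_space \<Rightarrow> real) \<Rightarrow> 'a measure \<Rightarrow> 'a set" where
  "msupp N P = {x. \<forall>t>0. 0 < measure P (nball N x t)}"

definition phi_r :: "real \<Rightarrow> real \<Rightarrow> nat \<Rightarrow> real" where
  "phi_r r u d = (1 / 3 powr r - u powr r) * u ^ d"

end

theory Submission
  imports Defs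
begin

text \<open>
  Write E_n = e_r(a^(n), P)^r and D_n(x) = d(x, a^(n)). Since a_(n+1) is optimal, E_(n+1) is at
  most the \<nu>-average over y of the error of a^(n) \<union> {y}, that is of the double integral of
  min(D_n(x), N(x - y))^r. For x in the support of P, every y in the ball B(x, \<epsilon> D_n(x)) lowers
  the inner integrand from D_n(x)^r to at most \<epsilon>^r D_n(x)^r, and that ball has \<nu>-mass at least
  g(x) V_d \<epsilon>^d D_n(x)^d; hence E_(n+1) \<le> E_n - \<phi>_r(\<epsilon>) V_d \<integral> g D_n^(r+d) dP.
  Holder's inequality bounds the last integral from below by E_n^(1+d/r) (\<integral> g^(-r/d) dP)^(-d/r),
  and a sequence with E_(n+1) \<le> E_n - k E_n^(1+\<delta>) satisfies E_n \<le> (\<delta> k (n - 1))^(-1/\<delta>),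
  because E_n^(-\<delta>) grows by at least \<delta> k in each step.
\<close>

section \<open>Norms on a Euclidean space\<close>

lemma is_norm_zero: "is_norm N \<Longrightarrow> N 0 = 0"
  unfolding is_norm_def by auto

lemma is_norm_nonneg: "is_norm N \<Longrightarrow> 0 \<le> N x"
  unfolding is_norm_def by auto

lemma is_norm_triangle: "is_norm N \<Longrightarrow> N (x + y) \<le> N x + N y"
  unfolding is_norm_def by auto

lemma is_norm_scaleR: "is_norm N \<Longrightarrow> N (c *\<^sub>R x) = \<bar>c\<bar> * N x"
  unfolding is_norm_def by auto

lemma is_norm_pos: "is_norm N \<Longrightarrow> x \<noteq> 0 \<Longrightarrow> 0 < N x"
  unfolding is_norm_def by (metis order_le_less)

lemma is_norm_minus_commute: "is_norm N \<Longrightarrow> N (x - y) = N (y - x)"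
  using is_norm_scaleR[of N "-1" "x - y"] by simp

lemma is_norm_triangle_diff: "is_norm N \<Longrightarrow> N (x - z) \<le> N (x - y) + N (y - z)"
  using is_norm_triangle[of N "x - y" "y - z"] by simp

lemma convex_on_is_norm:
  assumes "is_norm N"
  shows "convex_on UNIV N"
proof (rule convex_onI)
  fix t :: real and x y assume "0 < t" "t < 1"
  then show "N ((1 - t) *\<^sub>R x + t *\<^sub>R y) \<le> (1 - t) * N x + t * N y"
    using is_norm_triangle[OF assms, of "(1 - t) *\<^sub>R x" "t *\<^sub>R y"] is_norm_scaleR[OF assms]
    by simp
qed simp

lemma continuous_on_is_norm: "is_norm N \<Longrightarrow> continuous_on UNIV N"
  by (simp add: convex_on_continuous convex_on_is_norm)

lemma borel_measurable_is_norm [measurable]: "is_norm N \<Longrightarrow> N \<in> borel_measurable borel"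
  by (simp add: borel_measurable_continuous_onI continuous_on_is_norm)

lemma is_norm_ge_mult_norm:
  assumes "is_norm N"
  obtains c where "0 < c" "\<And>x. c * norm x \<le> N x"
proof -
  have "sphere (0::'a) 1 \<noteq> {}" by simp
  then obtain u where u: "u \<in> sphere 0 1" "\<And>y. y \<in> sphere 0 1 \<Longrightarrow> N u \<le> N y"
    using continuous_attains_inf[OF compact_sphere _ continuous_on_subset[OF continuous_on_is_norm[OF assms]]]
    by blast
  have "N u * norm x \<le> N x" for x
  proof (cases "x = 0")
    case False
    then have "N u \<le> N ((1 / norm x) *\<^sub>R x)" using u(2) by simp
    then show ?thesis using False is_norm_scaleR[OF assms] by (simp add: field_simps)
  qed (simp add: is_norm_zero[OF assms])
  moreover have "u \<noteq> 0" using u(1) by auto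
  then have "0 < N u" by (rule is_norm_pos[OF assms])
  ultimately show thesis using that by blast
qed

lemma continuous_on_is_norm_diff: "is_norm N \<Longrightarrow> continuous_on UNIV (\<lambda>y. N (y - x))"
  by (rule continuous_on_compose2[OF continuous_on_is_norm]) (auto intro: continuous_intros)

lemma open_is_norm_less: "is_norm N \<Longrightarrow> open {y. N (y - x) < t}"
  by (rule open_Collect_less[OF continuous_on_is_norm_diff continuous_on_const])

lemma nball_in_borel [measurable]: "is_norm N \<Longrightarrow> nball N x t \<in> sets borel"
  unfolding nball_def
  by (rule borel_closed[OF closed_Collect_le[OF continuous_on_is_norm_diff continuous_on_const]])

lemma unit_ball_vol_pos:
  assumes N: "is_norm N"
  shows "0 < unit_ball_vol N"
proof -
  obtain c where c: "0 < c" "\<And>x. c * norm x \<le> N x" using is_norm_ge_mult_norm[OF N] by blast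
  have "nball N 0 1 \<subseteq> cball 0 (1 / c)"
  proof
    fix x assume "x \<in> nball N 0 1"
    then have "c * norm x \<le> 1" using c(2)[of x] by (simp add: nball_def)
    then show "x \<in> cball 0 (1 / c)" using c(1) by (simp add: field_simps)
  qed
  then have "bounded (nball N 0 1)" using bounded_cball bounded_subset by blast
  then have fin: "nball N 0 1 \<in> fmeasurable lborel"
    using N emeasure_bounded_finite by (auto simp: fmeasurable_def)
  have "0 \<in> {y. N (y - 0) < 1}" using is_norm_zero[OF N] by simp
  then obtain e where e: "0 < e" "ball 0 e \<subseteq> {y. N (y - 0) < 1}"
    using open_contains_ball_eq[OF open_is_norm_less[OF N]] by blast
  then have "ball 0 e \<subseteq> nball N 0 1" by (auto simp: nball_def)
  then have "measure lborel (ball (0::'a) e) \<le> unit_ball_vol N"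
    unfolding unit_ball_vol_def by (intro measure_mono_fmeasurable[OF _ _ fin]) auto
  moreover have "0 < measure lborel (ball (0::'a) e)"
    using content_ball_pos[OF e(1)] by (simp add: measure_completion)
  ultimately show ?thesis by linarith
qed

lemma AE_in_msupp:
  fixes N :: "'a::euclidean_space \<Rightarrow> real"
  assumes N: "is_norm N" and P: "finite_measure P" and P_borel: "sets P = sets borel"
  shows "AE x in P. x \<in> msupp N P"
proof -
  define \<F> where "\<F> = {U :: 'a set. open U \<and> U \<in> null_sets P}"
  obtain \<F>' where \<F>': "\<F>' \<subseteq> \<F>" "countable \<F>'" "\<Union>\<F>' = \<Union>\<F>"
    using Lindelof[of \<F>] unfolding \<F>_def by blast
  have "(\<Union>U\<in>\<F>'. U) \<in> null_sets P"
    using \<F>' by (intro null_sets_UN') (auto simp: \<F>_def)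
  then have null: "\<Union>\<F> \<in> null_sets P" using \<F>'(3) by simp
  have "x \<in> \<Union>\<F>" if x: "x \<notin> msupp N P" for x
  proof -
    obtain t where t: "0 < t" "\<not> 0 < measure P (nball N x t)"
      using x unfolding msupp_def by blast
    then have "measure P (nball N x t) = 0" using measure_nonneg[of P "nball N x t"] by linarith
    then have "nball N x t \<in> null_sets P"
      using N P_borel by (intro null_setsI) (simp_all add: finite_measure.emeasure_eq_measure[OF P])
    moreover have "{y. N (y - x) < t} \<subseteq> nball N x t" by (auto simp: nball_def)
    moreover have "{y. N (y - x) < t} \<in> sets P"
      using P_borel open_is_norm_less[OF N] by simp
    ultimately have "{y. N (y - x) < t} \<in> \<F>"
      using open_is_norm_less[OF N] unfolding \<F>_def by (blast intro: null_sets_subset)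
    moreover have "x \<in> {y. N (y - x) < t}" using t(1) is_norm_zero[OF N] by simp
    ultimately show ?thesis by blast
  qed
  then show ?thesis by (intro AE_I'[OF null]) blast
qed

section \<open>Distance to a finite set and quantization error\<close>

lemma ndist_set_le: "finite \<Gamma> \<Longrightarrow> b \<in> \<Gamma> \<Longrightarrow> ndist_set N x \<Gamma> \<le> N (x - b)"
  unfolding ndist_set_def by (rule Min_le) auto

lemma ndist_set_nonneg: "is_norm N \<Longrightarrow> finite \<Gamma> \<Longrightarrow> \<Gamma> \<noteq> {} \<Longrightarrow> 0 \<le> ndist_set N x \<Gamma>"
  unfolding ndist_set_def using is_norm_nonneg by (subst Min_ge_iff) auto

lemma ndist_set_insert:
  "finite \<Gamma> \<Longrightarrow> \<Gamma> \<noteq> {} \<Longrightarrow> ndist_set N x (insert y \<Gamma>) = min (N (x - y)) (ndist_set N x \<Gamma>)"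
  unfolding ndist_set_def by simp

lemma borel_measurable_ndist_set [measurable]:
  "is_norm N \<Longrightarrow> finite \<Gamma> \<Longrightarrow> (\<lambda>x. ndist_set N x \<Gamma>) \<in> borel_measurable borel"
  unfolding ndist_set_def by (rule borel_measurable_Min) auto

lemma powr_add_le_two_powr:
  fixes u v r :: real
  assumes "0 \<le> u" "0 \<le> v" "0 \<le> r"
  shows "(u + v) powr r \<le> 2 powr r * (u powr r + v powr r)"
proof -
  have "(u + v) powr r \<le> (2 * max u v) powr r" using assms by (intro powr_mono2) auto
  also have "\<dots> = 2 powr r * max u v powr r" using assms by (simp add: powr_mult)
  also have "\<dots> \<le> 2 powr r * (u powr r + v powr r)" by (intro mult_left_mono) (auto simp: max_def)
  finally show ?thesis .
qed

lemma integrable_ndist_set_powr: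
  fixes N :: "'a::euclidean_space \<Rightarrow> real"
  assumes N: "is_norm N" and r: "0 \<le> r" and P: "finite_measure P"
    and P_borel [measurable_cong]: "sets P = sets borel"
    and moment: "integrable P (\<lambda>x. N x powr r)" and \<Gamma>: "finite \<Gamma>" "b \<in> \<Gamma>"
  shows "integrable P (\<lambda>x. ndist_set N x \<Gamma> powr r)"
proof (rule Bochner_Integration.integrable_bound)
  show "integrable P (\<lambda>x. 2 powr r * (N x powr r + N b powr r))"
    by (intro integrable_mult_right Bochner_Integration.integrable_add moment
        finite_measure.integrable_const[OF P])
  show "(\<lambda>x. ndist_set N x \<Gamma> powr r) \<in> borel_measurable P"
    using N \<Gamma> by measurable
  have "ndist_set N x \<Gamma> powr r \<le> 2 powr r * (N x powr r + N b powr r)" for x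
  proof -
    have "ndist_set N x \<Gamma> \<le> N x + N b"
      using ndist_set_le[OF \<Gamma>, of N x] is_norm_triangle_diff[OF N, of x b 0]
        is_norm_minus_commute[OF N, of 0 b] by simp
    then have "ndist_set N x \<Gamma> powr r \<le> (N x + N b) powr r"
      using ndist_set_nonneg[OF N \<Gamma>(1)] \<Gamma>(2) r by (intro powr_mono2) auto
    also have "\<dots> \<le> 2 powr r * (N x powr r + N b powr r)"
      using is_norm_nonneg[OF N] r by (intro powr_add_le_two_powr)
    finally show ?thesis .
  qed
  then show "AE x in P. norm (ndist_set N x \<Gamma> powr r) \<le> norm (2 powr r * (N x powr r + N b powr r))"
    by (intro AE_I2) simp
qed

lemma quant_err_eq_integral:
  assumes "integrable P (\<lambda>x. ndist_set N x \<Gamma> powr r)"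
  shows "quant_err N r \<Gamma> P = (\<integral>x. ndist_set N x \<Gamma> powr r \<partial>P) powr (1 / r)"
  unfolding quant_err_def by (subst nn_integral_eq_integral[OF assms]) simp_all

lemma nn_integral_min_powr_le:
  fixes N :: "'a::euclidean_space \<Rightarrow> real"
  assumes N: "is_norm N" and \<nu>: "prob_space \<nu>" and \<nu>_borel: "sets \<nu> = sets borel"
    and r: "0 < r" and \<delta>: "0 \<le> \<delta>" and \<epsilon>: "0 \<le> \<epsilon>" "\<epsilon> \<le> 1"
  shows "(\<integral>\<^sup>+ y. ennreal (min \<delta> (N (x - y)) powr r) \<partial>\<nu>)
    \<le> ennreal (\<delta> powr r - (1 - \<epsilon> powr r) * \<delta> powr r * measure \<nu> (nball N x (\<epsilon> * \<delta>)))"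
proof -
  interpret \<nu>: prob_space \<nu> by (rule \<nu>)
  define B where "B = nball N x (\<epsilon> * \<delta>)"
  define k where "k = (1 - \<epsilon> powr r) * \<delta> powr r"
  have B: "B \<in> sets \<nu>" unfolding B_def using \<nu>_borel N by simp
  have "\<epsilon> powr r \<le> 1" using \<epsilon> r by (intro powr_le1) auto
  then have k: "0 \<le> k" "k \<le> \<delta> powr r"
    unfolding k_def using mult_left_le[of "\<epsilon> powr r" "\<delta> powr r"] by (auto simp: algebra_simps)
  have bound: "min \<delta> (N (x - y)) powr r \<le> \<delta> powr r - k * indicator B y" for y
  proof (cases "y \<in> B")
    case True
    then have "min \<delta> (N (x - y)) \<le> \<epsilon> * \<delta>"
      unfolding B_def nball_def using is_norm_minus_commute[OF N, of x y] by simp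
    then have "min \<delta> (N (x - y)) powr r \<le> (\<epsilon> * \<delta>) powr r"
      using r \<delta> is_norm_nonneg[OF N] by (intro powr_mono2) auto
    then show ?thesis using True \<epsilon> \<delta> unfolding k_def by (simp add: powr_mult algebra_simps)
  next
    case False
    have "min \<delta> (N (x - y)) powr r \<le> \<delta> powr r"
      using r \<delta> is_norm_nonneg[OF N] by (intro powr_mono2) auto
    then show ?thesis using False by simp
  qed
  have int: "integrable \<nu> (\<lambda>y. \<delta> powr r - k * indicator B y)"
    using B by (intro Bochner_Integration.integrable_diff integrable_mult_right integrable_real_indicator)
      (auto simp: less_top[symmetric])
  have "(\<integral>\<^sup>+ y. ennreal (min \<delta> (N (x - y)) powr r) \<partial>\<nu>) \<le> (\<integral>\<^sup>+ y. ennreal (\<delta> powr r - k * indicator B y) \<partial>\<nu>)"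
    by (intro nn_integral_mono ennreal_leI bound)
  also have "\<dots> = ennreal (\<integral>y. \<delta> powr r - k * indicator B y \<partial>\<nu>)"
    using k by (intro nn_integral_eq_integral[OF int] AE_I2) (auto simp: indicator_def)
  also have "(\<integral>y. \<delta> powr r - k * indicator B y \<partial>\<nu>) = \<delta> powr r - k * measure \<nu> B"
    using B by (subst Bochner_Integration.integral_diff)
      (auto simp: less_top[symmetric] \<nu>.prob_space intro!: integrable_mult_right integrable_real_indicator)
  finally show ?thesis unfolding B_def k_def .
qed

lemma finite_first_pts [simp]: "finite (first_pts a n)"
  unfolding first_pts_def by simp

lemma first_pts_Suc: "first_pts a (Suc n) = insert (a (Suc n)) (first_pts a n)"
  unfolding first_pts_def by (simp add: atLeastAtMostSuc_conv)

lemma first_in_first_pts: "1 \<le> n \<Longrightarrow> a 1 \<in> first_pts a n"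
  unfolding first_pts_def by simp

section \<open>Real inequalities\<close>

lemma Youngs_inequality_nonneg:
  fixes a b :: real
  assumes "0 \<le> \<alpha>" "0 \<le> \<beta>" "\<alpha> + \<beta> = 1" "0 \<le> a" "0 \<le> b"
  shows "a powr \<alpha> * b powr \<beta> \<le> \<alpha> * a + \<beta> * b"
  using Youngs_inequality_0[of \<alpha> \<beta> a b] assms by (cases "a = 0 \<or> b = 0") auto

lemma integral_powr_mult_powr_le:
  fixes X Y :: "'a \<Rightarrow> real"
  assumes X: "integrable M X" "\<And>x. 0 \<le> X x" and Y: "integrable M Y" "\<And>x. 0 \<le> Y x"
    and pq: "0 \<le> p" "0 \<le> q" "p + q = 1"
  shows "(\<integral>x. X x powr p * Y x powr q \<partial>M) \<le> (\<integral>x. X x \<partial>M) powr p * (\<integral>x. Y x \<partial>M) powr q"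
proof -
  define A where "A = (\<integral>x. X x \<partial>M)"
  define B where "B = (\<integral>x. Y x \<partial>M)"
  have "0 \<le> A" "0 \<le> B" unfolding A_def B_def using X Y by simp_all
  then consider "A = 0" | "B = 0" | "0 < A" "0 < B" by linarith
  then show ?thesis
  proof cases
    case 1
    then have "AE x in M. X x = 0" using X integral_nonneg_eq_0_iff_AE unfolding A_def by blast
    then have "(\<integral>x. X x powr p * Y x powr q \<partial>M) = 0"
      by (intro integral_eq_zero_AE) (auto elim: eventually_mono)
    then show ?thesis by simp
  next
    case 2
    then have "AE x in M. Y x = 0" using Y integral_nonneg_eq_0_iff_AE unfolding B_def by blast
    then have "(\<integral>x. X x powr p * Y x powr q \<partial>M) = 0"
      by (intro integral_eq_zero_AE) (auto elim: eventually_mono)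
    then show ?thesis by simp
  next
    case 3
    define R where "R x = A powr p * B powr q * (p * X x / A + q * Y x / B)" for x
    have bound: "X x powr p * Y x powr q \<le> R x" for x
    proof -
      have "(X x / A) powr p * (Y x / B) powr q \<le> p * (X x / A) + q * (Y x / B)"
        using 3 X Y pq by (intro Youngs_inequality_nonneg) auto
      moreover have "(X x / A) powr p * (Y x / B) powr q = X x powr p * Y x powr q / (A powr p * B powr q)"
        using 3 X Y by (simp add: powr_divide)
      ultimately show ?thesis
        using 3 unfolding R_def by (simp add: pos_divide_le_eq mult.commute)
    qed
    have R: "integrable M R" unfolding R_def using X Y by simp
    have "(\<integral>x. X x powr p * Y x powr q \<partial>M) \<le> (\<integral>x. R x \<partial>M)"
    proof (rule integral_mono[OF Bochner_Integration.integrable_bound[OF R] R])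
      show "(\<lambda>x. X x powr p * Y x powr q) \<in> borel_measurable M"
        using X(1) Y(1) by measurable
      show "AE x in M. norm (X x powr p * Y x powr q) \<le> norm (R x)"
        using bound by (intro AE_I2) (simp add: abs_mult order_trans[OF _ abs_ge_self])
    qed (rule bound)
    also have "(\<integral>x. R x \<partial>M) = A powr p * B powr q * (p * A / A + q * B / B)"
      unfolding R_def A_def B_def using X Y by simp
    also have "\<dots> = A powr p * B powr q" using 3 pq by simp
    finally show ?thesis unfolding A_def B_def .
  qed
qed

lemma one_plus_mult_le_powr:
  fixes s \<delta> :: real
  assumes "s < 1" "0 \<le> \<delta>"
  shows "1 + \<delta> * s \<le> (1 - s) powr (- \<delta>)"
proof -
  have "1 + \<delta> * s \<le> 1 + \<delta> * - ln (1 - s)"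
    using mult_left_mono[OF _ assms(2), of s "- ln (1 - s)"] ln_le_minus_one[of "1 - s"] assms
    by simp
  also have "\<dots> \<le> exp (- \<delta> * ln (1 - s))"
    using exp_ge_add_one_self[of "- \<delta> * ln (1 - s)"] by simp
  also have "\<dots> = (1 - s) powr (- \<delta>)" using assms by (simp add: powr_def)
  finally show ?thesis .
qed

lemma powr_neg_increment:
  fixes x y k \<delta> :: real
  assumes y: "0 < y" "y \<le> x - k * x powr (1 + \<delta>)" and k: "0 \<le> k" and \<delta>: "0 \<le> \<delta>"
  shows "x powr (- \<delta>) + \<delta> * k \<le> y powr (- \<delta>)"
proof -
  have "0 \<le> k * x powr (1 + \<delta>)" using k by simp
  then have "0 < x" using y by linarith
  define s where "s = k * x powr \<delta>"
  have "y \<le> x * (1 - s)"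
    using y \<open>0 < x\<close> unfolding s_def by (simp add: powr_add algebra_simps)
  then have "0 < x * (1 - s)" using y(1) by linarith
  then have "0 < 1 - s" using \<open>0 < x\<close> by (simp add: zero_less_mult_iff)
  have "x powr (- \<delta>) + \<delta> * k = x powr (- \<delta>) * (1 + \<delta> * s)"
    using \<open>0 < x\<close> unfolding s_def by (simp add: algebra_simps powr_add[symmetric])
  also have "\<dots> \<le> x powr (- \<delta>) * (1 - s) powr (- \<delta>)"
    using \<open>0 < 1 - s\<close> \<delta> by (intro mult_left_mono one_plus_mult_le_powr) auto
  also have "\<dots> = (x * (1 - s)) powr (- \<delta>)"
    using \<open>0 < x\<close> \<open>0 < 1 - s\<close> by (simp add: powr_mult)
  also have "\<dots> \<le> y powr (- \<delta>)"
    using \<open>y \<le> x * (1 - s)\<close> y(1) \<delta> by (intro powr_mono2') auto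
  finally show ?thesis .
qed

lemma powr_recurrence_bound:
  fixes E :: "nat \<Rightarrow> real"
  assumes nonneg: "\<And>n. 1 \<le> n \<Longrightarrow> 0 \<le> E n"
    and rec: "\<And>n. 1 \<le> n \<Longrightarrow> E (Suc n) \<le> E n - k * E n powr (1 + \<delta>)"
    and k: "0 < k" and \<delta>: "0 < \<delta>" and n: "2 \<le> n"
  shows "E n \<le> (\<delta> * k * (real n - 1)) powr (- 1 / \<delta>)"
proof -
  have growth: "E n = 0 \<or> \<delta> * k * (real n - 1) \<le> E n powr (- \<delta>)" if "1 \<le> n" for n
    using that
  proof (induction n rule: dec_induct)
    case (step m)
    show ?case
    proof (cases "E (Suc m) = 0")
      case False
      then have pos: "0 < E (Suc m)" using nonneg[of "Suc m"] by simp
      have "E m \<noteq> 0" using pos rec[OF step(1)] by auto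
      then have "\<delta> * k * (real m - 1) \<le> E m powr (- \<delta>)" using step(3) by simp
      moreover have "E m powr (- \<delta>) + \<delta> * k \<le> E (Suc m) powr (- \<delta>)"
        using pos rec[OF step(1)] k \<delta> by (intro powr_neg_increment) auto
      ultimately show ?thesis by (simp add: algebra_simps)
    qed simp
  qed simp
  have pos: "0 < \<delta> * k * (real n - 1)" using n k \<delta> by simp
  show ?thesis
  proof (cases "E n = 0")
    case False
    then have "0 < E n" using nonneg[of n] n by simp
    have "\<delta> * k * (real n - 1) \<le> E n powr (- \<delta>)" using growth[of n] n False by simp
    then have "(E n powr (- \<delta>)) powr (- 1 / \<delta>) \<le> (\<delta> * k * (real n - 1)) powr (- 1 / \<delta>)"
      using pos \<delta> by (intro powr_mono2') auto
    then show ?thesis using \<open>0 < E n\<close> \<delta> by (simp add: powr_powr)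
  qed simp
qed

lemma powr_weight_cancel:
  fixes w u r d :: real
  assumes "0 < w" "0 \<le> u" "0 < r" "0 < d"
  shows "(w * u powr (r + d)) powr (r / (r + d)) * (w powr (- r / d)) powr (d / (r + d)) = u powr r"
proof -
  have "(w * u powr (r + d)) powr (r / (r + d)) = w powr (r / (r + d)) * u powr r"
    using assms by (simp add: powr_mult powr_powr)
  moreover have "(w powr (- r / d)) powr (d / (r + d)) = w powr (- (r / (r + d)))"
    using assms by (simp add: powr_powr)
  ultimately show ?thesis
    using assms by (simp add: powr_minus field_simps)
qed

lemma rate_constant_powr:
  fixes \<phi> V G m r d :: real
  assumes "0 < \<phi>" "0 < V" "0 < G" "0 < m" "0 < r" "0 < d"
  shows "((d / r * (\<phi> * V * G powr (- (d / r))) * m) powr (- 1 / (d / r))) powr (1 / r)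
    = \<phi> powr (- 1 / d) * V powr (- 1 / d) * (r / d) powr (1 / d) * G powr (1 / r) * m powr (- 1 / d)"
proof -
  define \<delta> where "\<delta> = d / r"
  have \<delta>: "0 < \<delta>" unfolding \<delta>_def using assms by simp
  have "((\<delta> * (\<phi> * V * G powr (- \<delta>)) * m) powr (- 1 / \<delta>)) powr (1 / r)
      = (\<delta> * (\<phi> * V * G powr (- \<delta>)) * m) powr (- 1 / d)"
    unfolding \<delta>_def using assms by (simp add: powr_powr)
  also have "\<dots> = \<delta> powr (- 1 / d) * \<phi> powr (- 1 / d) * V powr (- 1 / d)
      * (G powr (- \<delta>)) powr (- 1 / d) * m powr (- 1 / d)"
    using assms \<delta> by (simp add: powr_mult)
  also have "(G powr (- \<delta>)) powr (- 1 / d) = G powr (1 / r)"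
    unfolding \<delta>_def using assms by (simp add: powr_powr)
  also have "\<delta> powr (- 1 / d) = (r / d) powr (1 / d)"
    unfolding \<delta>_def using assms by (simp add: powr_minus_divide powr_divide)
  finally show ?thesis unfolding \<delta>_def by (simp add: ac_simps)
qed

section \<open>The error recursion of a greedy sequence\<close>

locale greedy_quantization =
  fixes N :: "'a::euclidean_space \<Rightarrow> real" and r :: real and P :: "'a measure" and a :: "nat \<Rightarrow> 'a"
  assumes norm: "is_norm N" and r_pos: "0 < r"
    and P_prob: "prob_space P" and P_borel [measurable_cong]: "sets P = sets borel"
    and moment: "(\<integral>\<^sup>+ x. ennreal (N x powr r) \<partial>P) < \<infinity>"
    and greedy: "greedy_seq N r P a"
begin

interpretation P: prob_space P by (rule P_prob)

definition greedy_dist :: "nat \<Rightarrow> 'a \<Rightarrow> real" where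
  "greedy_dist n x = ndist_set N x (first_pts a n)"

definition greedy_err :: "nat \<Rightarrow> real" where
  "greedy_err n = (\<integral>x. greedy_dist n x powr r \<partial>P)"

lemma borel_measurable_greedy_dist [measurable]: "greedy_dist n \<in> borel_measurable borel"
  unfolding greedy_dist_def[abs_def] using norm by measurable

lemma greedy_dist_nonneg: "1 \<le> n \<Longrightarrow> 0 \<le> greedy_dist n x"
  unfolding greedy_dist_def using first_in_first_pts by (intro ndist_set_nonneg[OF norm]) auto

lemma greedy_dist_le: "1 \<le> n \<Longrightarrow> greedy_dist n x \<le> N (x - a 1)"
  unfolding greedy_dist_def by (intro ndist_set_le first_in_first_pts) auto

lemma integrable_ndist_powr:
  assumes "finite \<Gamma>" "b \<in> \<Gamma>"
  shows "integrable P (\<lambda>x. ndist_set N x \<Gamma> powr r)"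
proof (rule integrable_ndist_set_powr[OF norm _ P.finite_measure_axioms P_borel _ assms])
  show "integrable P (\<lambda>x. N x powr r)"
    using moment norm by (intro integrableI_bounded) auto
qed (use r_pos in simp)

lemma integrable_greedy_dist_powr: "1 \<le> n \<Longrightarrow> integrable P (\<lambda>x. greedy_dist n x powr r)"
  unfolding greedy_dist_def by (rule integrable_ndist_powr[OF _ first_in_first_pts]) auto

lemma AE_msupp: "AE x in P. x \<in> msupp N P"
  by (rule AE_in_msupp[OF norm P.finite_measure_axioms P_borel])

lemma greedy_err_nonneg: "0 \<le> greedy_err n"
  unfolding greedy_err_def by simp

lemma quant_err_first_pts: "1 \<le> n \<Longrightarrow> quant_err N r (first_pts a n) P = greedy_err n powr (1 / r)"
  unfolding greedy_err_def greedy_dist_def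
  by (intro quant_err_eq_integral integrable_ndist_powr[OF _ first_in_first_pts]) auto

lemma greedy_err_Suc_le_ndist_insert:
  assumes "1 \<le> n"
  shows "greedy_err (Suc n) \<le> (\<integral>x. ndist_set N x (insert y (first_pts a n)) powr r \<partial>P)"
    (is "_ \<le> ?F")
proof -
  have int: "integrable P (\<lambda>x. ndist_set N x (insert y (first_pts a n)) powr r)"
    using assms by (intro integrable_ndist_powr[OF _ insertI2[OF first_in_first_pts]]) auto
  have "quant_err N r (first_pts a (Suc n)) P \<le> quant_err N r (insert y (first_pts a n)) P"
    using greedy unfolding greedy_seq_def first_pts_Suc by simp
  then have "greedy_err (Suc n) powr (1 / r) \<le> ?F powr (1 / r)"
    using quant_err_first_pts[of "Suc n"] quant_err_eq_integral[OF int] by simp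
  then show ?thesis
    using powr_less_mono2[of "1 / r" ?F "greedy_err (Suc n)"] r_pos by (auto simp: not_le[symmetric])
qed

lemma greedy_err_Suc_le_average:
  assumes n: "1 \<le> n" and \<nu>: "prob_space \<nu>" and \<nu>_borel [measurable_cong]: "sets \<nu> = sets borel"
  shows "ennreal (greedy_err (Suc n))
    \<le> (\<integral>\<^sup>+ x. \<integral>\<^sup>+ y. ennreal (min (greedy_dist n x) (N (x - y)) powr r) \<partial>\<nu> \<partial>P)"
proof -
  interpret \<nu>: prob_space \<nu> by (rule \<nu>)
  interpret P\<nu>: pair_sigma_finite P \<nu> by unfold_locales
  have ndist_insert: "ndist_set N x (insert y (first_pts a n)) = min (greedy_dist n x) (N (x - y))" for x y
    unfolding greedy_dist_def using n first_in_first_pts[OF n]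
    by (subst ndist_set_insert) (auto simp: min.commute)
  have "ennreal (greedy_err (Suc n)) = (\<integral>\<^sup>+ y. ennreal (greedy_err (Suc n)) \<partial>\<nu>)"
    by (simp add: \<nu>.emeasure_space_1)
  also have "\<dots> \<le> (\<integral>\<^sup>+ y. (\<integral>\<^sup>+ x. ennreal (min (greedy_dist n x) (N (x - y)) powr r) \<partial>P) \<partial>\<nu>)"
  proof (intro nn_integral_mono)
    fix y
    have "integrable P (\<lambda>x. ndist_set N x (insert y (first_pts a n)) powr r)"
      using n by (intro integrable_ndist_powr[OF _ insertI2[OF first_in_first_pts]]) auto
    then show "ennreal (greedy_err (Suc n))
      \<le> (\<integral>\<^sup>+ x. ennreal (min (greedy_dist n x) (N (x - y)) powr r) \<partial>P)"
      using greedy_err_Suc_le_ndist_insert[OF n, of y]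
      by (subst nn_integral_eq_integral) (auto simp: ndist_insert)
  qed
  also have "\<dots> = (\<integral>\<^sup>+ x. \<integral>\<^sup>+ y. ennreal (min (greedy_dist n x) (N (x - y)) powr r) \<partial>\<nu> \<partial>P)"
    using norm by (intro P\<nu>.Fubini') measurable
  finally show ?thesis .
qed

end

locale greedy_quantization_ball_bound = greedy_quantization +
  fixes \<epsilon> :: real and \<nu> :: "'a measure" and g :: "'a \<Rightarrow> real"
  assumes eps: "0 < \<epsilon>" "\<epsilon> < 1/3"
    and nu_prob: "prob_space \<nu>" and nu_borel: "sets \<nu> = sets borel"
    and g_meas [measurable]: "g \<in> borel_measurable borel" and g_nonneg: "\<And>x. 0 \<le> g x"
    and g_bound: "\<And>x t. x \<in> msupp N P \<Longrightarrow> 0 \<le> t \<Longrightarrow> t \<le> \<epsilon> * N (x - a 1) \<Longrightarrow>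
        g x * unit_ball_vol N * t ^ DIM('a) \<le> measure \<nu> (nball N x t)"
    and int_fin: "(\<integral>\<^sup>+ x. (if g x = 0 then \<infinity> else ennreal (g x powr (- r / DIM('a)))) \<partial>P) < \<infinity>"
begin

interpretation P: prob_space P by (rule P_prob)
interpretation \<nu>: prob_space \<nu> by (rule nu_prob)

definition decrement_factor :: real where
  "decrement_factor = phi_r r \<epsilon> DIM('a) * unit_ball_vol N"

definition weighted_err :: "nat \<Rightarrow> real" where
  "weighted_err n = (\<integral>x. g x * greedy_dist n x powr (r + DIM('a)) \<partial>P)"

definition weight_integral :: real where
  "weight_integral = (\<integral>x. g x powr (- r / DIM('a)) \<partial>P)"

lemma phi_r_pos: "0 < phi_r r \<epsilon> DIM('a)"
proof -
  have "\<epsilon> powr r < (1 / 3) powr r" using eps r_pos by (intro powr_less_mono2) auto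
  then show ?thesis unfolding phi_r_def using eps by (simp add: powr_divide)
qed

lemma decrement_factor_pos: "0 < decrement_factor"
  unfolding decrement_factor_def using phi_r_pos unit_ball_vol_pos[OF norm] by simp

lemma decrement_le_ball_mass:
  assumes n: "1 \<le> n" and x: "x \<in> msupp N P"
  defines "\<delta> \<equiv> greedy_dist n x"
  shows "decrement_factor * (g x * \<delta> powr (r + DIM('a)))
    \<le> (1 - \<epsilon> powr r) * \<delta> powr r * measure \<nu> (nball N x (\<epsilon> * \<delta>))"
proof -
  have \<delta>: "0 \<le> \<delta>" unfolding \<delta>_def using greedy_dist_nonneg[OF n] .
  have ball: "g x * unit_ball_vol N * (\<epsilon> * \<delta>) ^ DIM('a) \<le> measure \<nu> (nball N x (\<epsilon> * \<delta>))"
    using eps \<delta> greedy_dist_le[OF n, of x] unfolding \<delta>_def by (intro g_bound[OF x]) auto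
  have "1 / 3 powr r \<le> 1" using r_pos by (simp add: ge_one_powr_ge_zero)
  then have le: "1 / 3 powr r - \<epsilon> powr r \<le> 1 - \<epsilon> powr r" by simp
  have "0 \<le> 1 / 3 powr r - \<epsilon> powr r"
    using phi_r_pos eps unfolding phi_r_def by (simp add: zero_less_mult_iff)
  then have "0 \<le> 1 - \<epsilon> powr r" using le by linarith
  have Q: "0 \<le> g x * unit_ball_vol N * (\<epsilon> * \<delta>) ^ DIM('a)"
    using g_nonneg unit_ball_vol_pos[OF norm] eps \<delta> by simp
  have "decrement_factor * (g x * \<delta> powr (r + DIM('a)))
      = (1 / 3 powr r - \<epsilon> powr r) * \<delta> powr r * (g x * unit_ball_vol N * (\<epsilon> * \<delta>) ^ DIM('a))"
    unfolding decrement_factor_def phi_r_def using \<delta>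
    by (simp add: powr_add powr_realpow' power_mult_distrib algebra_simps)
  also have "\<dots> \<le> (1 - \<epsilon> powr r) * \<delta> powr r * (g x * unit_ball_vol N * (\<epsilon> * \<delta>) ^ DIM('a))"
    by (intro mult_right_mono[OF mult_right_mono[OF le] Q]) simp
  also have "\<dots> \<le> (1 - \<epsilon> powr r) * \<delta> powr r * measure \<nu> (nball N x (\<epsilon> * \<delta>))"
    using \<open>0 \<le> 1 - \<epsilon> powr r\<close> by (intro mult_left_mono[OF ball]) simp
  finally show ?thesis .
qed

lemma average_min_greedy_dist_le:
  assumes n: "1 \<le> n" and x: "x \<in> msupp N P"
  shows "(\<integral>\<^sup>+ y. ennreal (min (greedy_dist n x) (N (x - y)) powr r) \<partial>\<nu>)
    \<le> ennreal (greedy_dist n x powr r - decrement_factor * (g x * greedy_dist n x powr (r + DIM('a))))"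
proof -
  have "(\<integral>\<^sup>+ y. ennreal (min (greedy_dist n x) (N (x - y)) powr r) \<partial>\<nu>)
    \<le> ennreal (greedy_dist n x powr r - (1 - \<epsilon> powr r) * greedy_dist n x powr r
        * measure \<nu> (nball N x (\<epsilon> * greedy_dist n x)))"
    using eps r_pos greedy_dist_nonneg[OF n]
    by (intro nn_integral_min_powr_le[OF norm nu_prob nu_borel]) auto
  also have "\<dots> \<le> ennreal (greedy_dist n x powr r - decrement_factor * (g x * greedy_dist n x powr (r + DIM('a))))"
    using decrement_le_ball_mass[OF n x] by (intro ennreal_leI) simp
  finally show ?thesis .
qed

lemma decrement_le_greedy_dist_powr:
  assumes n: "1 \<le> n" and x: "x \<in> msupp N P"
  shows "decrement_factor * (g x * greedy_dist n x powr (r + DIM('a))) \<le> greedy_dist n x powr r"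
proof -
  have "\<epsilon> powr r \<le> 1" using eps r_pos by (intro powr_le1) auto
  then have "(1 - \<epsilon> powr r) * greedy_dist n x powr r * measure \<nu> (nball N x (\<epsilon> * greedy_dist n x))
      \<le> 1 * greedy_dist n x powr r * 1"
    by (intro mult_mono) (auto simp: \<nu>.prob_le_1)
  then show ?thesis using decrement_le_ball_mass[OF n x] by simp
qed

lemma integrable_weighted_greedy_dist:
  assumes n: "1 \<le> n"
  shows "integrable P (\<lambda>x. g x * greedy_dist n x powr (r + DIM('a)))"
proof (rule Bochner_Integration.integrable_bound)
  show "integrable P (\<lambda>x. greedy_dist n x powr r / decrement_factor)"
    using integrable_greedy_dist_powr[OF n] by simp
  show "AE x in P. norm (g x * greedy_dist n x powr (r + DIM('a)))
      \<le> norm (greedy_dist n x powr r / decrement_factor)"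
    using AE_msupp
  proof eventually_elim
    case (elim x)
    then show ?case
      using decrement_le_greedy_dist_powr[OF n elim] decrement_factor_pos g_nonneg[of x]
      by (simp add: abs_mult pos_le_divide_eq mult.commute)
  qed
qed measurable

lemma greedy_err_Suc_le:
  assumes n: "1 \<le> n"
  shows "greedy_err (Suc n) \<le> greedy_err n - decrement_factor * weighted_err n"
proof -
  let ?f = "\<lambda>x. greedy_dist n x powr r - decrement_factor * (g x * greedy_dist n x powr (r + DIM('a)))"
  have int: "integrable P ?f"
    using integrable_greedy_dist_powr[OF n] integrable_weighted_greedy_dist[OF n] by simp
  have nonneg: "AE x in P. 0 \<le> ?f x"
    using AE_msupp by eventually_elim (use decrement_le_greedy_dist_powr[OF n] in simp)
  have "ennreal (greedy_err (Suc n))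
      \<le> (\<integral>\<^sup>+ x. \<integral>\<^sup>+ y. ennreal (min (greedy_dist n x) (N (x - y)) powr r) \<partial>\<nu> \<partial>P)"
    by (rule greedy_err_Suc_le_average[OF n nu_prob nu_borel])
  also have "\<dots> \<le> (\<integral>\<^sup>+ x. ennreal (?f x) \<partial>P)"
    using AE_msupp by (intro nn_integral_mono_AE) (auto elim: eventually_mono
        intro: average_min_greedy_dist_le[OF n])
  also have "\<dots> = ennreal (\<integral>x. ?f x \<partial>P)"
    by (rule nn_integral_eq_integral[OF int nonneg])
  also have "(\<integral>x. ?f x \<partial>P) = greedy_err n - decrement_factor * weighted_err n" (is "_ = ?rhs")
    unfolding greedy_err_def weighted_err_def
    using integrable_greedy_dist_powr[OF n] integrable_weighted_greedy_dist[OF n] by simp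
  finally have "ennreal (greedy_err (Suc n)) \<le> ennreal ?rhs" .
  moreover have "0 \<le> ?rhs" using integral_nonneg_AE[OF nonneg] \<open>(\<integral>x. ?f x \<partial>P) = ?rhs\<close> by simp
  ultimately show ?thesis by (simp add: ennreal_le_iff)
qed

lemma AE_g_pos: "AE x in P. 0 < g x"
proof -
  have "AE x in P. (if g x = 0 then \<infinity> else ennreal (g x powr (- r / DIM('a)))) \<noteq> \<infinity>"
    using int_fin by (intro nn_integral_PInf_AE) auto
  then show ?thesis
    by eventually_elim (use g_nonneg in \<open>auto simp: order_le_less split: if_splits\<close>)
qed

lemma nn_integral_weight_eq: "(\<integral>\<^sup>+ x. (if g x = 0 then \<infinity> else ennreal (g x powr (- r / DIM('a)))) \<partial>P)
    = (\<integral>\<^sup>+ x. ennreal (g x powr (- r / DIM('a))) \<partial>P)"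
  using AE_g_pos by (intro nn_integral_cong_AE) (auto elim: eventually_mono)

lemma integrable_weight: "integrable P (\<lambda>x. g x powr (- r / DIM('a)))"
  using int_fin nn_integral_weight_eq by (intro integrableI_bounded) auto

lemma enn2real_weight_integral:
  "enn2real (\<integral>\<^sup>+ x. (if g x = 0 then \<infinity> else ennreal (g x powr (- r / DIM('a)))) \<partial>P) = weight_integral"
  unfolding nn_integral_weight_eq weight_integral_def
  by (subst nn_integral_eq_integral[OF integrable_weight]) auto

lemma weight_integral_pos: "0 < weight_integral"
proof -
  have "weight_integral \<noteq> 0"
  proof
    assume "weight_integral = 0"
    then have "AE x in P. g x powr (- r / DIM('a)) = 0"
      using integral_nonneg_eq_0_iff_AE[OF integrable_weight] unfolding weight_integral_def by simp
    with AE_g_pos have "AE x in P. False" by eventually_elim simp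
    then show False by simp
  qed
  moreover have "0 \<le> weight_integral" unfolding weight_integral_def by simp
  ultimately show ?thesis by simp
qed

lemma greedy_err_le_Holder:
  assumes n: "1 \<le> n"
  shows "greedy_err n \<le> weighted_err n powr (r / (r + DIM('a))) * weight_integral powr (DIM('a) / (r + DIM('a)))"
proof -
  have "greedy_err n = (\<integral>x. (g x * greedy_dist n x powr (r + DIM('a))) powr (r / (r + DIM('a)))
      * (g x powr (- r / DIM('a))) powr (DIM('a) / (r + DIM('a))) \<partial>P)"
    unfolding greedy_err_def
  proof (intro integral_cong_AE)
    show "AE x in P. greedy_dist n x powr r = (g x * greedy_dist n x powr (r + DIM('a))) powr (r / (r + DIM('a)))
      * (g x powr (- r / DIM('a))) powr (DIM('a) / (r + DIM('a)))"
      using AE_g_pos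
      by eventually_elim (use powr_weight_cancel greedy_dist_nonneg[OF n] r_pos in simp)
  qed measurable
  also have "\<dots> \<le> weighted_err n powr (r / (r + DIM('a))) * weight_integral powr (DIM('a) / (r + DIM('a)))"
    unfolding weighted_err_def weight_integral_def
    using r_pos g_nonneg greedy_dist_nonneg[OF n]
    by (intro integral_powr_mult_powr_le integrable_weighted_greedy_dist[OF n] integrable_weight)
      (auto simp: add_divide_distrib[symmetric])
  finally show ?thesis .
qed

lemma greedy_err_recurrence:
  assumes n: "1 \<le> n"
  defines "k \<equiv> decrement_factor * weight_integral powr (- (DIM('a) / r))"
  shows "greedy_err (Suc n) \<le> greedy_err n - k * greedy_err n powr (1 + DIM('a) / r)"
proof -
  define p where "p = r / (r + DIM('a))"
  have "0 < r + DIM('a)" using r_pos by simp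
  then have p: "0 < p" "1 / p = 1 + DIM('a) / r" "DIM('a) / (r + DIM('a)) * (1 / p) = DIM('a) / r"
    unfolding p_def using r_pos by (simp_all add: divide_simps)
  have G: "0 < weight_integral" by (rule weight_integral_pos)
  have A: "0 \<le> weighted_err n" unfolding weighted_err_def using g_nonneg by simp
  have "greedy_err n powr (1 / p)
      \<le> (weighted_err n powr p * weight_integral powr (DIM('a) / (r + DIM('a)))) powr (1 / p)"
    using greedy_err_le_Holder[OF n, folded p_def] greedy_err_nonneg p(1) by (intro powr_mono2) auto
  also have "\<dots> = weighted_err n powr (p * (1 / p)) * weight_integral powr (DIM('a) / (r + DIM('a)) * (1 / p))"
    using A G by (simp add: powr_mult powr_powr)
  also have "\<dots> = weighted_err n * weight_integral powr (DIM('a) / r)"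
    unfolding p(3) using p(1) A by simp
  finally have weighted_err_ge:
      "greedy_err n powr (1 + DIM('a) / r) * weight_integral powr (- (DIM('a) / r)) \<le> weighted_err n"
    unfolding p(2) using G by (simp add: powr_minus divide_simps)
  have "k * greedy_err n powr (1 + DIM('a) / r) \<le> decrement_factor * weighted_err n"
    using mult_left_mono[OF weighted_err_ge less_imp_le[OF decrement_factor_pos]] unfolding k_def
    by (simp add: ac_simps)
  then show ?thesis using greedy_err_Suc_le[OF n] by simp
qed

lemma greedy_err_le_rate:
  assumes n: "2 \<le> n"
  shows "greedy_err n \<le> (DIM('a) / r * (decrement_factor * weight_integral powr (- (DIM('a) / r)))
    * (real n - 1)) powr (- 1 / (DIM('a) / r))"
  using greedy_err_nonneg greedy_err_recurrence decrement_factor_pos weight_integral_pos r_pos n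
  by (intro powr_recurrence_bound) auto

lemma quant_err_first_pts_le:
  assumes n: "2 \<le> n"
  shows "quant_err N r (first_pts a n) P \<le>
     phi_r r \<epsilon> DIM('a) powr (- 1 / DIM('a)) * unit_ball_vol N powr (- 1 / DIM('a))
     * (r / DIM('a)) powr (1 / DIM('a)) * weight_integral powr (1 / r)
     * (real n - 1) powr (- 1 / DIM('a))"
proof -
  have "quant_err N r (first_pts a n) P = greedy_err n powr (1 / r)"
    using n by (intro quant_err_first_pts) simp
  also have "\<dots> \<le> ((DIM('a) / r * (decrement_factor * weight_integral powr (- (DIM('a) / r)))
      * (real n - 1)) powr (- 1 / (DIM('a) / r))) powr (1 / r)"
    using greedy_err_le_rate[OF n] greedy_err_nonneg r_pos by (intro powr_mono2) auto
  also have "\<dots> = phi_r r \<epsilon> DIM('a) powr (- 1 / DIM('a)) * unit_ball_vol N powr (- 1 / DIM('a))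
     * (r / DIM('a)) powr (1 / DIM('a)) * weight_integral powr (1 / r)
     * (real n - 1) powr (- 1 / DIM('a))"
    unfolding decrement_factor_def
    using phi_r_pos unit_ball_vol_pos[OF norm] weight_integral_pos r_pos n
    by (intro rate_constant_powr) auto
  finally show ?thesis .
qed

end

theorem proposition2p3:
  fixes N :: "'a::euclidean_space \<Rightarrow> real"
    and r \<epsilon> :: real
    and P \<nu> :: "'a measure"
    and a :: "nat \<Rightarrow> 'a"
    and g :: "'a \<Rightarrow> real"
  assumes norm: "is_norm N"
    and r_pos: "0 < r"
    and P_prob: "prob_space P" and P_borel: "sets P = sets borel"
    and moment: "(\<integral>\<^sup>+ x. ennreal (N x powr r) \<partial>P) < \<infinity>"
    and greedy: "greedy_seq N r P a"
    and eps: "0 < \<epsilon>" "\<epsilon> < 1/3"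
    and nu_prob: "prob_space \<nu>" and nu_borel: "sets \<nu> = sets borel"
    and g_meas: "g \<in> borel_measurable borel" and g_nonneg: "\<And>x. 0 \<le> g x"
    and g_bound: "\<And>x t. x \<in> msupp N P \<Longrightarrow> 0 \<le> t \<Longrightarrow> t \<le> \<epsilon> * N (x - a 1) \<Longrightarrow>
        g x * unit_ball_vol N * t ^ DIM('a) \<le> measure \<nu> (nball N x t)"
    and int_fin: "(\<integral>\<^sup>+ x. (if g x = 0 then \<infinity> else ennreal (g x powr (- r / DIM('a)))) \<partial>P) < \<infinity>"
  shows "\<forall>n\<ge>2. quant_err N r (first_pts a n) P \<le>
     phi_r r \<epsilon> DIM('a) powr (- 1 / DIM('a)) * unit_ball_vol N powr (- 1 / DIM('a))
     * (r / DIM('a)) powr (1 / DIM('a))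
     * (enn2real (\<integral>\<^sup>+ x. (if g x = 0 then \<infinity> else ennreal (g x powr (- r / DIM('a)))) \<partial>P)) powr (1 / r)
     * (real n - 1) powr (- 1 / DIM('a))"
proof -
  interpret greedy_quantization_ball_bound N r P a \<epsilon> \<nu> g
    using assms by (intro greedy_quantization_ball_bound.intro greedy_quantization.intro
        greedy_quantization_ball_bound_axioms.intro)
  show ?thesis
    unfolding enn2real_weight_integral using quant_err_first_pts_le by blast
qed

end
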